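(* Let $\mathcal{D}$ be a symmetric operator on a Hilbert space $\mathcal{H}$, and suppose there exists an adequate approximate identity for $\mathcal{D}$. Then $\mathcal{D}$ is essentially self-adjoint.
   Context: A sequential approximate identity on a Hilbert $B$-module $E$ (here $B=\mathbb{C}$, $E=\mathcal{H}$) is a sequence of self-adjoint operators $\phi_k\in\mathrm{End}_B(E)$, $k\in\mathbb{N}$, converging strongly to the identity on $E$. For a symmetric operator $\mathcal{D}$ on $E$, an adequate approximate identity for $\mathcal{D}$ is a sequential approximate identity $\{\phi_k\}$ such that $\phi_k\cdot\mathrm{Dom}\,\mathcal{D}^*\subset\mathrm{Dom}\,\bar{\mathcal{D}}$, $[\bar{\mathcal{D}},\phi_k]$ is bounded on $\mathrm{Dom}\,\mathcal{D}$ for all $k$, and $\sup_k\|\overline{[\bar{\mathcal{D}},\phi_k]}\|<\infty$. *)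

theory Defs
  imports "HOL-Analysis.Analysis"
begin

class scaleC = scaleR +
  fixes scaleC :: "complex \<Rightarrow> 'a \<Rightarrow> 'a"
  assumes scaleR_scaleC: "scaleR r = scaleC (complex_of_real r)"

class complex_vector = scaleC + real_vector +
  assumes scaleC_add_right: "scaleC a (x + y) = scaleC a x + scaleC a y"
    and scaleC_add_left: "scaleC (a + b) x = scaleC a x + scaleC b x"
    and scaleC_scaleC: "scaleC a (scaleC b x) = scaleC (a * b) x"
    and scaleC_one: "scaleC 1 x = x"

class complex_inner = complex_vector + real_normed_vector +
  fixes cinner :: "'a \<Rightarrow> 'a \<Rightarrow> complex"
  assumes cinner_commute: "cinner x y = cnj (cinner y x)"
    and cinner_add_left: "cinner (x + y) z = cinner x z + cinner y z"
    and cinner_scaleC_left: "cinner (scaleC r x) y = cnj r * cinner x y"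
    and cinner_nonneg: "0 \<le> Re (cinner x x)"
    and cinner_eq_zero_iff: "cinner x x = 0 \<longleftrightarrow> x = 0"
    and norm_eq_sqrt_cinner: "norm x = sqrt (Re (cinner x x))"

section \<open>Unbounded operators, given as a domain S and a map T\<close>

definition csubspace :: "'a::complex_vector set \<Rightarrow> bool" where
  "csubspace S \<longleftrightarrow> 0 \<in> S \<and> (\<forall>x\<in>S. \<forall>y\<in>S. x + y \<in> S) \<and> (\<forall>c. \<forall>x\<in>S. scaleC c x \<in> S)"

definition clinear_on :: "'a::complex_vector set \<Rightarrow> ('a \<Rightarrow> 'b::complex_vector) \<Rightarrow> bool" where
  "clinear_on S T \<longleftrightarrow> csubspace S \<and> (\<forall>x\<in>S. \<forall>y\<in>S. T (x + y) = T x + T y)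
     \<and> (\<forall>c. \<forall>x\<in>S. T (scaleC c x) = scaleC c (T x))"

definition symmetric_op :: "'a::complex_inner set \<Rightarrow> ('a \<Rightarrow> 'a) \<Rightarrow> bool" where
  "symmetric_op S T \<longleftrightarrow> clinear_on S T \<and> closure S = UNIV
     \<and> (\<forall>x\<in>S. \<forall>y\<in>S. cinner (T x) y = cinner x (T y))"

definition adj_dom :: "'a::complex_inner set \<Rightarrow> ('a \<Rightarrow> 'a) \<Rightarrow> 'a set" where
  "adj_dom S T = {y. \<exists>z. \<forall>x\<in>S. cinner (T x) y = cinner x z}"

definition adj_op :: "'a::complex_inner set \<Rightarrow> ('a \<Rightarrow> 'a) \<Rightarrow> 'a \<Rightarrow> 'a" where
  "adj_op S T y = (SOME z. \<forall>x\<in>S. cinner (T x) y = cinner x z)"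

text \<open>Closure of an operator: closure of its graph (meaningful for closable operators).\<close>
definition graph_op :: "'a set \<Rightarrow> ('a \<Rightarrow> 'b) \<Rightarrow> ('a \<times> 'b) set" where
  "graph_op S T = {(x, T x) | x. x \<in> S}"

definition closure_dom :: "'a::complex_inner set \<Rightarrow> ('a \<Rightarrow> 'a) \<Rightarrow> 'a set" where
  "closure_dom S T = fst ` closure (graph_op S T)"

definition closure_op :: "'a::complex_inner set \<Rightarrow> ('a \<Rightarrow> 'a) \<Rightarrow> 'a \<Rightarrow> 'a" where
  "closure_op S T x = (THE z. (x, z) \<in> closure (graph_op S T))"

definition self_adjoint_op :: "'a::complex_inner set \<Rightarrow> ('a \<Rightarrow> 'a) \<Rightarrow> bool" where
  "self_adjoint_op S T \<longleftrightarrow> clinear_on S T \<and> closure S = UNIV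
     \<and> adj_dom S T = S \<and> (\<forall>x\<in>S. adj_op S T x = T x)"

definition ess_self_adjoint :: "'a::complex_inner set \<Rightarrow> ('a \<Rightarrow> 'a) \<Rightarrow> bool" where
  "ess_self_adjoint S T \<longleftrightarrow> self_adjoint_op (closure_dom S T) (closure_op S T)"

text \<open>Bounded self-adjoint operators on the whole space (End_B(E) with B = C).\<close>
definition bounded_selfadj :: "('a::complex_inner \<Rightarrow> 'a) \<Rightarrow> bool" where
  "bounded_selfadj A \<longleftrightarrow> clinear_on UNIV A \<and> (\<exists>K. \<forall>x. norm (A x) \<le> K * norm x)
     \<and> (\<forall>x y. cinner (A x) y = cinner x (A y))"

definition seq_approx_identity :: "(nat \<Rightarrow> 'a::complex_inner \<Rightarrow> 'a) \<Rightarrow> bool" where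
  "seq_approx_identity \<phi> \<longleftrightarrow> (\<forall>k. bounded_selfadj (\<phi> k)) \<and> (\<forall>x. (\<lambda>k. \<phi> k x) \<longlonglongrightarrow> x)"

text \<open>The commutator [closure D, phi_k] is evaluated on Dom D;
  the closure of a bounded densely defined operator has the same norm, so "bounded for each k
  with uniformly bounded closure norms" is expressed by a single uniform constant C.\<close>
definition adequate_approx_identity ::
    "'a::complex_inner set \<Rightarrow> ('a \<Rightarrow> 'a) \<Rightarrow> (nat \<Rightarrow> 'a \<Rightarrow> 'a) \<Rightarrow> bool" where
  "adequate_approx_identity S T \<phi> \<longleftrightarrow> seq_approx_identity \<phi>
     \<and> (\<forall>k. \<phi> k ` adj_dom S T \<subseteq> closure_dom S T)
     \<and> (\<exists>C. \<forall>k. \<forall>x\<in>S. norm (closure_op S T (\<phi> k x) - \<phi> k (T x)) \<le> C * norm x)"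

end

theory Submission
  imports Defs
begin

text \<open>Let \<open>y \<in> Dom D*\<close> with \<open>D* y = w\<close>. The vectors \<open>\<phi>\<^sub>k y\<close> lie in the domain of the closure
  \<open>D\<^sup>-\<close>, converge to \<open>y\<close>, and the identity
  \<open>\<langle>D\<^sup>- \<phi>\<^sub>k y, x\<rangle> = \<langle>\<phi>\<^sub>k w, x\<rangle> - \<langle>y, [D\<^sup>-, \<phi>\<^sub>k] x\<rangle>\<close> for \<open>x \<in> Dom D\<close> shows that
  \<open>D\<^sup>- \<phi>\<^sub>k y\<close> is bounded uniformly in \<open>k\<close> and converges weakly to \<open>w\<close>. The graph of \<open>D\<^sup>-\<close> is
  a closed subspace, hence weakly closed, so \<open>(y, w)\<close> lies in it: \<open>Dom D* \<subseteq> Dom D\<^sup>-\<close>.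
  A symmetric operator whose adjoint has no larger domain is self-adjoint, which applied to
  \<open>D\<^sup>-\<close> (using \<open>Dom D\<^sup>-* \<subseteq> Dom D*\<close>) gives the theorem.\<close>

section \<open>Complex inner product spaces\<close>

lemma cinner_add_right: "cinner x (y + z) = cinner x y + cinner x z"
  for x y z :: "'a::complex_inner"
proof -
  have "cinner x (y + z) = cnj (cinner (y + z) x)" by (rule cinner_commute)
  also have "\<dots> = cnj (cinner y x) + cnj (cinner z x)" by (simp add: cinner_add_left)
  finally show ?thesis by (simp flip: cinner_commute)
qed

lemma cinner_scaleC_right: "cinner x (scaleC r y) = r * cinner x y"
  for x y :: "'a::complex_inner"
proof -
  have "cinner x (scaleC r y) = cnj (cinner (scaleC r y) x)" by (rule cinner_commute)
  also have "\<dots> = r * cnj (cinner y x)" by (simp add: cinner_scaleC_left)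
  finally show ?thesis by (simp flip: cinner_commute)
qed

lemma cinner_zero_left[simp]: "cinner 0 y = 0"
  for y :: "'a::complex_inner"
proof -
  have "cinner (0::'a) y = cinner (0 + 0) y" by simp
  also have "\<dots> = cinner 0 y + cinner 0 y" by (rule cinner_add_left)
  finally show ?thesis by simp
qed

lemma cinner_zero_right[simp]: "cinner y 0 = 0"
  for y :: "'a::complex_inner"
  by (subst cinner_commute) simp

lemma cinner_minus_left: "cinner (- x) y = - cinner x y"
  for x y :: "'a::complex_inner"
proof -
  have "cinner x y + cinner (- x) y = cinner (x + - x) y" by (rule cinner_add_left[symmetric])
  also have "\<dots> = 0" by simp
  finally have "- cinner x y = cinner (- x) y" by (rule minus_unique)
  then show ?thesis by (rule sym)
qed

lemma cinner_minus_right: "cinner y (- x) = - cinner y x"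
  for x y :: "'a::complex_inner"
  by (subst cinner_commute) (simp add: cinner_minus_left flip: cinner_commute)

lemma cinner_diff_left: "cinner (x - y) z = cinner x z - cinner y z"
  for x y z :: "'a::complex_inner"
  by (simp only: diff_conv_add_uminus cinner_add_left cinner_minus_left)

lemma cinner_diff_right: "cinner z (x - y) = cinner z x - cinner z y"
  for x y z :: "'a::complex_inner"
  by (simp only: diff_conv_add_uminus cinner_add_right cinner_minus_right)

lemma cinner_scaleR_left: "cinner (scaleR r x) y = of_real r * cinner x y"
  for x y :: "'a::complex_inner"
  by (simp only: scaleR_scaleC cinner_scaleC_left complex_cnj_complex_of_real)

lemma cinner_scaleR_right: "cinner x (scaleR r y) = of_real r * cinner x y"
  for x y :: "'a::complex_inner"
  by (simp only: scaleR_scaleC cinner_scaleC_right)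

lemma Im_cinner_self: "Im (cinner x x) = 0"
  for x :: "'a::complex_inner"
proof -
  have "cinner x x = cnj (cinner x x)" by (rule cinner_commute)
  then have "Im (cinner x x) = Im (cnj (cinner x x))" by (rule arg_cong)
  then have "Im (cinner x x) = - Im (cinner x x)" by (simp only: cnj.sel(2))
  then show ?thesis by linarith
qed

lemma cinner_self: "cinner x x = of_real ((norm x)^2)"
  for x :: "'a::complex_inner"
proof -
  have "(norm x)^2 = (sqrt (Re (cinner x x)))^2" by (simp only: norm_eq_sqrt_cinner[of x])
  also have "\<dots> = Re (cinner x x)" using cinner_nonneg[of x] by simp
  finally have "(norm x)^2 = Re (cinner x x)" .
  then show ?thesis using Im_cinner_self by (simp add: complex_eq_iff)
qed

lemma Re_cinner_self: "Re (cinner x x) = (norm x)^2"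
  for x :: "'a::complex_inner"
  by (simp add: cinner_self)

lemma Re_cinner_sym: "Re (cinner x y) = Re (cinner y x)"
  for x y :: "'a::complex_inner"
  by (simp only: cinner_commute[of x y] cnj.sel(1))

lemma norm_diff_scaleR_sq:
  "(norm (q - scaleR t r))^2 = (norm q)^2 - 2 * t * Re (cinner q r) + t^2 * (norm r)^2"
  for q r :: "'a::complex_inner"
proof -
  have e: "cinner (q - scaleR t r) (q - scaleR t r) = cinner q q - of_real t * cinner q r - of_real t * cinner r q + of_real t * (of_real t * cinner r r)"
    by (simp only: cinner_diff_left cinner_diff_right cinner_scaleR_left cinner_scaleR_right) (simp add: algebra_simps)
  have "(norm (q - scaleR t r))^2 = Re (cinner (q - scaleR t r) (q - scaleR t r))"
    by (simp only: Re_cinner_self)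
  also have "\<dots> = Re (cinner q q) - t * Re (cinner q r) - t * Re (cinner r q) + t * (t * Re (cinner r r))"
    unfolding e by simp
  finally have "(norm (q - scaleR t r))^2 = Re (cinner q q) - t * Re (cinner q r) - t * Re (cinner r q) + t * (t * Re (cinner r r))" .
  moreover have "Re (cinner r q) = Re (cinner q r)" by (rule Re_cinner_sym)
  ultimately show ?thesis by (simp only: Re_cinner_self power2_eq_square)
qed

lemma cauchy_schwarz_Re: "\<bar>Re (cinner x y)\<bar> \<le> norm x * norm y"
  for x y :: "'a::complex_inner"
proof (cases "y = 0")
  case True then show ?thesis by simp
next
  case False
  define r where "r = Re (cinner x y)"
  define n where "n = (norm y)^2"
  have n0: "n > 0" using False by (simp add: n_def)
  define t where "t = r / n"
  have "0 \<le> (norm (x - scaleR t y))^2" by simp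
  also have "\<dots> = (norm x)^2 - 2 * t * r + t^2 * n"
    by (simp only: norm_diff_scaleR_sq r_def n_def)
  also have "2 * t * r = 2 * (r^2 / n)" by (simp add: t_def power2_eq_square)
  also have "t^2 * n = r^2 / n" using n0 by (simp add: t_def power2_eq_square)
  finally have "r^2 / n \<le> (norm x)^2" by simp
  then have "r^2 \<le> (norm x)^2 * n" using n0 by (simp add: divide_le_eq)
  also have "\<dots> = (norm x * norm y)^2" by (simp add: n_def power_mult_distrib)
  finally have "r^2 \<le> (norm x * norm y)^2" .
  then have "\<bar>r\<bar>^2 \<le> (norm x * norm y)^2" by simp
  then show ?thesis unfolding r_def
    by (rule power2_le_imp_le) simp
qed

lemma norm_scaleC: "norm (scaleC c x) = cmod c * norm x"
  for x :: "'a::complex_inner"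
proof -
  have "cinner (scaleC c x) (scaleC c x) = (c * cnj c) * cinner x x"
    by (simp only: cinner_scaleC_left cinner_scaleC_right mult.assoc mult.left_commute)
  also have "\<dots> = of_real ((cmod c)^2) * of_real ((norm x)^2)"
    by (simp only: complex_norm_square cinner_self)
  also have "\<dots> = of_real ((cmod c * norm x)^2)"
    by (simp only: of_real_mult power_mult_distrib)
  finally have "(norm (scaleC c x))^2 = (cmod c * norm x)^2"
    using Re_cinner_self[of "scaleC c x"] by simp
  then show ?thesis
    by (rule power2_eq_imp_eq) simp_all
qed

lemma cauchy_schwarz: "cmod (cinner x y) \<le> norm x * norm y"
  for x y :: "'a::complex_inner"
proof (cases "cinner x y = 0")
  case True then show ?thesis by simp
next
  case False
  define z where "z = cinner x y"
  have mz: "cmod z > 0" using False by (simp add: z_def)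
  define u where "u = cnj z / of_real (cmod z)"
  have cu: "cmod u = 1" using mz by (simp add: u_def norm_divide)
  have "cinner x (scaleC u y) = u * z" by (simp add: cinner_scaleC_right z_def)
  also have "\<dots> = (z * cnj z) / of_real (cmod z)" by (simp add: u_def mult.commute)
  also have "\<dots> = of_real ((cmod z)^2) / of_real (cmod z)" by (simp only: complex_norm_square)
  also have "\<dots> = of_real (cmod z)" using mz by (simp add: power2_eq_square)
  finally have "cmod z = Re (cinner x (scaleC u y))" by simp
  also have "\<dots> \<le> \<bar>Re (cinner x (scaleC u y))\<bar>" by (rule abs_ge_self)
  also have "\<dots> \<le> norm x * norm (scaleC u y)" by (rule cauchy_schwarz_Re)
  finally show ?thesis by (simp add: norm_scaleC cu z_def)
qed

lemma bounded_bilinear_cinner: "bounded_bilinear (cinner :: 'a::complex_inner \<Rightarrow> 'a \<Rightarrow> complex)"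
proof
  show "\<exists>K. \<forall>a b. cmod (cinner a b) \<le> norm a * norm b * K"
    by (rule exI[of _ 1]) (simp add: cauchy_schwarz)
qed (auto simp: cinner_add_left cinner_add_right cinner_scaleR_left cinner_scaleR_right scaleR_conv_of_real)

lemma bounded_linear_scaleC: "bounded_linear (scaleC c :: 'a::complex_inner \<Rightarrow> 'a)"
proof (rule bounded_linear_intro[where K="cmod c"])
  fix x y :: 'a and r :: real
  show "scaleC c (x + y) = scaleC c x + scaleC c y" by (rule scaleC_add_right)
  show "scaleC c (r *\<^sub>R x) = r *\<^sub>R scaleC c x"
    by (simp only: scaleR_scaleC scaleC_scaleC mult.commute)
  show "norm (scaleC c x) \<le> norm x * cmod c" by (simp add: norm_scaleC mult.commute)
qed

instantiation prod :: (complex_vector, complex_vector) complex_vector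
begin
definition scaleC_prod_def: "scaleC c x = (scaleC c (fst x), scaleC c (snd x))"
instance
proof
  fix r :: real
  show "((*\<^sub>R) r :: 'a \<times> 'b \<Rightarrow> _) = scaleC (complex_of_real r)"
    by (rule ext) (simp only: scaleC_prod_def scaleR_prod_def scaleR_scaleC)
next
  fix a b :: complex and x y :: "'a \<times> 'b"
  show "scaleC a (x + y) = scaleC a x + scaleC a y"
    by (simp only: scaleC_prod_def fst_add snd_add scaleC_add_right plus_prod_def fst_conv snd_conv)
  show "scaleC (a + b) x = scaleC a x + scaleC b x"
    by (simp only: scaleC_prod_def scaleC_add_left plus_prod_def fst_conv snd_conv)
  show "scaleC a (scaleC b x) = scaleC (a * b) x"
    by (simp only: scaleC_prod_def scaleC_scaleC fst_conv snd_conv)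
  show "scaleC 1 x = x"
    by (simp only: scaleC_prod_def scaleC_one prod.collapse)
qed
end

instantiation prod :: (complex_inner, complex_inner) complex_inner
begin
definition cinner_prod_def: "cinner x y = cinner (fst x) (fst y) + cinner (snd x) (snd y)"
instance
proof
  fix x y z :: "'a \<times> 'b" and r
  show "cinner x y = cnj (cinner y x)"
    by (simp only: cinner_prod_def complex_cnj_add cinner_commute[of "fst y"] cinner_commute[of "snd y"] complex_cnj_cnj)
  show "cinner (x + y) z = cinner x z + cinner y z"
    by (simp only: cinner_prod_def fst_add snd_add cinner_add_left add_ac)
  show "cinner (scaleC r x) y = cnj r * cinner x y"
    by (simp only: cinner_prod_def scaleC_prod_def fst_conv snd_conv cinner_scaleC_left distrib_left)
  show "0 \<le> Re (cinner x x)"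
    by (simp add: cinner_prod_def Re_cinner_self)
  show "norm x = sqrt (Re (cinner x x))"
    by (simp add: cinner_prod_def Re_cinner_self norm_prod_def)
  show "(cinner x x = 0) = (x = 0)"
  proof
    assume h: "cinner x x = 0"
    have "Re (cinner x x) = 0" using h by simp
    then have "(norm (fst x))^2 + (norm (snd x))^2 = 0"
      by (simp add: cinner_prod_def Re_cinner_self)
    then have "fst x = 0" "snd x = 0" by (simp_all add: add_nonneg_eq_0_iff)
    then show "x = 0" by (simp add: prod_eq_iff)
  qed (simp add: cinner_prod_def)
qed
end

lemma scaleC_Pair: "scaleC c (a, b) = (scaleC c a, scaleC c b)"
  by (simp add: scaleC_prod_def)

lemma tendsto_cinner:
  fixes f g :: "nat \<Rightarrow> 'a::complex_inner"
  assumes "f \<longlonglongrightarrow> a" "g \<longlonglongrightarrow> b"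
  shows "(\<lambda>n. cinner (f n) (g n)) \<longlonglongrightarrow> cinner a b"
  using bounded_bilinear.tendsto[OF bounded_bilinear_cinner assms] .

section \<open>Weak limits\<close>

lemma orthogonal_dense_eq_0:
  fixes S :: "'a::complex_inner set"
  assumes "closure S = UNIV" "\<And>u. u \<in> S \<Longrightarrow> cinner u v = 0"
  shows "v = 0"
proof -
  obtain u where uS: "\<And>n. u n \<in> S" and lim: "u \<longlonglongrightarrow> v"
    using assms(1) closure_sequential by blast
  have "(\<lambda>n. cinner (u n) v) \<longlonglongrightarrow> cinner v v"
    by (rule tendsto_cinner[OF lim tendsto_const])
  moreover have "(\<lambda>n. cinner (u n) v) = (\<lambda>n. 0)" using uS assms(2) by simp
  ultimately have "cinner v v = 0" using LIMSEQ_unique tendsto_const by metis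
  then show ?thesis by (simp add: cinner_eq_zero_iff)
qed

lemma norm_le_if_cinner_bounded_on_dense:
  fixes z :: "'a::complex_inner"
  assumes "closure S = UNIV" "M \<ge> 0" "\<And>x. x \<in> S \<Longrightarrow> cmod (cinner z x) \<le> M * norm x"
  shows "norm z \<le> M"
proof -
  obtain u where uS: "\<And>n. u n \<in> S" and lim: "u \<longlonglongrightarrow> z"
    using assms(1) closure_sequential by blast
  have "(\<lambda>n. cmod (cinner z (u n))) \<longlonglongrightarrow> cmod (cinner z z)"
    by (intro tendsto_norm tendsto_cinner[OF tendsto_const lim])
  moreover have "(\<lambda>n. M * norm (u n)) \<longlonglongrightarrow> M * norm z"
    by (intro tendsto_mult tendsto_const tendsto_norm lim)
  ultimately have "cmod (cinner z z) \<le> M * norm z"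
    by (rule LIMSEQ_le) (auto intro: assms(3) uS)
  then have "norm z * norm z \<le> M * norm z"
    by (simp add: cinner_self power2_eq_square norm_mult)
  then show ?thesis
    using assms(2) by (cases "norm z = 0") auto
qed

lemma weak_convergence_from_dense:
  fixes a :: "nat \<Rightarrow> 'a::complex_inner"
  assumes dense: "closure S = UNIV" and bnd: "\<And>k. norm (a k) \<le> M"
    and conv: "\<And>x. x \<in> S \<Longrightarrow> (\<lambda>k. cinner (a k) x) \<longlonglongrightarrow> cinner b x"
  shows "(\<lambda>k. cinner (a k) v) \<longlonglongrightarrow> cinner b v"
proof (rule LIMSEQ_I)
  fix r :: real assume r: "r > 0"
  have M0: "M \<ge> 0" using bnd[of 0] norm_ge_zero order_trans by blast
  define \<delta> where "\<delta> = r / (3 * (M + norm b + 1))"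
  have \<delta>0: "\<delta> > 0" using r M0 by (simp add: \<delta>_def add_nonneg_pos)
  have approx: "(M + norm b) * \<delta> < r / 3"
  proof -
    have "(M + norm b) * \<delta> = r / 3 * ((M + norm b) / (M + norm b + 1))"
      using M0 by (simp add: \<delta>_def field_simps)
    also have "\<dots> < r / 3"
      using M0 r by (simp add: divide_less_eq add_nonneg_pos)
    finally show ?thesis .
  qed
  obtain x where xS: "x \<in> S" and xv: "norm (v - x) < \<delta>"
    using \<delta>0 dense closure_approachable[of v S] by (auto simp: dist_norm norm_minus_commute)
  obtain N where N: "\<And>n. n \<ge> N \<Longrightarrow> cmod (cinner (a n) x - cinner b x) < r / 3"
    using LIMSEQ_D[OF conv[OF xS], of "r/3"] r by auto
  show "\<exists>N. \<forall>n\<ge>N. norm (cinner (a n) v - cinner b v) < r"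
  proof (intro exI allI impI)
    fix n assume n: "n \<ge> N"
    have "cmod (cinner (a n) (v - x)) \<le> M * \<delta>"
      using cauchy_schwarz[of "a n" "v - x"] bnd[of n] xv M0
      by (smt (verit) mult_mono norm_ge_zero)
    moreover have "cmod (cinner b (v - x)) \<le> norm b * \<delta>"
      using cauchy_schwarz[of b "v - x"] xv
      by (smt (verit) mult_left_mono norm_ge_zero)
    moreover have "cinner (a n) v - cinner b v
        = cinner (a n) (v - x) + (cinner (a n) x - cinner b x) - cinner b (v - x)"
      by (simp add: cinner_diff_right)
    ultimately have "cmod (cinner (a n) v - cinner b v) < M * \<delta> + r / 3 + norm b * \<delta>"
      using N[OF n] norm_triangle_ineq[of "cinner (a n) (v - x)" "cinner (a n) x - cinner b x"]
        norm_triangle_ineq4[of "cinner (a n) (v - x) + (cinner (a n) x - cinner b x)" "cinner b (v - x)"]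
      by simp
    with approx r show "norm (cinner (a n) v - cinner b v) < r"
      by (simp add: algebra_simps)
  qed
qed

text \<open>Moving from \<open>h \<in> G\<close> towards \<open>g \<in> G\<close> cannot bring us closer to \<open>p\<close> than \<open>infdist p G\<close>.\<close>
lemma Re_cinner_le_infdist_convex:
  fixes G :: "'a::complex_inner set"
  assumes "convex G" "h \<in> G" "g \<in> G" "0 \<le> t" "t \<le> 1"
  shows "2 * t * Re (cinner (p - h) (g - h))
    \<le> (norm (p - h))\<^sup>2 - (infdist p G)\<^sup>2 + t\<^sup>2 * (norm (g - h))\<^sup>2"
proof -
  have "(1 - t) *\<^sub>R h + t *\<^sub>R g \<in> G" using convexD_alt[OF assms] .
  then have "infdist p G \<le> dist p ((1 - t) *\<^sub>R h + t *\<^sub>R g)" by (rule infdist_le)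
  also have "\<dots> = norm ((p - h) - t *\<^sub>R (g - h))" by (simp add: dist_norm algebra_simps)
  finally have "(infdist p G)\<^sup>2 \<le> (norm ((p - h) - t *\<^sub>R (g - h)))\<^sup>2"
    by (simp add: power_mono infdist_nonneg)
  then show ?thesis using norm_diff_scaleR_sq[of "p - h" t "g - h"] by linarith
qed

lemma infdist_approx_sq:
  assumes "A \<noteq> {}" "\<eta> > 0"
  obtains a where "a \<in> A" "dist x a < infdist x A + 1" "(dist x a)\<^sup>2 < (infdist x A)\<^sup>2 + \<eta>"
proof -
  define d where "d = infdist x A"
  define \<delta> where "\<delta> = min 1 (\<eta> / (2 * d + 1))"
  have d0: "d \<ge> 0" by (simp add: d_def infdist_nonneg)
  have \<delta>: "0 < \<delta>" "\<delta> \<le> 1" "\<delta> * (2 * d + 1) \<le> \<eta>"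
  proof -
    have "\<delta> * (2 * d + 1) \<le> \<eta> / (2 * d + 1) * (2 * d + 1)"
      using d0 by (intro mult_right_mono) (auto simp: \<delta>_def)
    then show "\<delta> * (2 * d + 1) \<le> \<eta>" using d0 by simp
  qed (use assms(2) d0 in \<open>auto simp: \<delta>_def\<close>)
  have "(INF a\<in>A. dist x a) < d + \<delta>"
    using \<delta>(1) infdist_notempty[OF assms(1)] by (simp add: d_def)
  then obtain a where a: "a \<in> A" "dist x a < d + \<delta>"
    using assms(1) by (subst (asm) cINF_less_iff) (auto intro: bdd_belowI2[of _ 0])
  have "(dist x a)\<^sup>2 < (d + \<delta>)\<^sup>2" using a(2) by (simp add: power_strict_mono)
  also have "\<dots> \<le> d\<^sup>2 + \<delta> * (2 * d + 1)"
    using \<delta> d0 by (simp add: power2_eq_square algebra_simps mult_left_le)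
  finally show ?thesis
    using that a \<delta> unfolding d_def by force
qed

lemma weak_limit_in_closed_convex:
  fixes G :: "'a::complex_inner set"
  assumes cl: "closed G" and cv: "convex G" and gG: "\<And>k. g k \<in> G"
    and gB: "\<And>k. norm (g k) \<le> B"
    and wk: "\<And>q. (\<lambda>k. Re (cinner q (g k))) \<longlonglongrightarrow> Re (cinner q p)"
  shows "p \<in> G"
proof (rule ccontr)
  assume "p \<notin> G"
  define d where "d = infdist p G"
  have d0: "d > 0" unfolding d_def using infdist_pos_not_in_closed[OF cl _ \<open>p \<notin> G\<close>] gG by blast
  define R where "R = B + norm p + d + 1"
  have "0 \<le> B" using gB[of 0] norm_ge_zero order_trans by blast
  then have R: "R \<ge> d" "R > 0" using d0 by (auto simp: R_def intro: add_nonneg_pos)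
  obtain h where hG: "h \<in> G" and hp: "norm (p - h) < d + 1"
    and gap: "(norm (p - h))\<^sup>2 < d\<^sup>2 + d^4 / (2 * R\<^sup>2)"
    using infdist_approx_sq[of G "d^4 / (2 * R\<^sup>2)" p] gG d0 R
    by (auto simp: d_def dist_norm)
  have gh: "norm (g k - h) \<le> R" for k
  proof -
    have "norm h \<le> norm p + norm (p - h)" using norm_triangle_ineq4[of p "p - h"] by simp
    then show ?thesis
      using gB[of k] hp norm_triangle_ineq4[of "g k" h] by (simp add: R_def)
  qed
  define t where "t = d\<^sup>2 / (2 * R\<^sup>2)"
  have t: "0 \<le> t" "t \<le> 1"
    using R d0 by (auto simp: t_def field_simps power_mono intro: order_trans[of _ "R\<^sup>2"])
  have "2 * t * Re (cinner (p - h) (g k - h)) \<le> d^4 / (2 * R\<^sup>2) + t\<^sup>2 * R\<^sup>2" for k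
  proof -
    have "t\<^sup>2 * (norm (g k - h))\<^sup>2 \<le> t\<^sup>2 * R\<^sup>2"
      using gh[of k] by (intro mult_left_mono power_mono) auto
    then show ?thesis
      using Re_cinner_le_infdist_convex[OF cv hG gG[of k] t, of p] gap unfolding d_def by linarith
  qed
  moreover have "(\<lambda>k. Re (cinner (p - h) (g k - h))) \<longlonglongrightarrow> Re (cinner (p - h) (p - h))"
    using tendsto_diff[OF wk[of "p - h"] tendsto_const[of "Re (cinner (p - h) h)"]]
    by (simp add: cinner_diff_right)
  ultimately have "2 * t * (norm (p - h))\<^sup>2 \<le> d^4 / (2 * R\<^sup>2) + t\<^sup>2 * R\<^sup>2"
    by (intro tendsto_le[OF _ tendsto_const tendsto_mult_left]) (auto simp: Re_cinner_self)
  moreover have "d\<^sup>2 \<le> (norm (p - h))\<^sup>2"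
    using infdist_le[OF hG, of p] by (simp add: d_def dist_norm power_mono infdist_nonneg)
  ultimately have "2 * t * d\<^sup>2 \<le> d^4 / (2 * R\<^sup>2) + t\<^sup>2 * R\<^sup>2"
    using t(1) by (smt (verit) mult_left_mono)
  moreover have "2 * t * d\<^sup>2 = d^4 / R\<^sup>2" "t\<^sup>2 * R\<^sup>2 = d^4 / (4 * R\<^sup>2)"
    using R by (simp_all add: t_def field_simps power2_eq_square eval_nat_numeral)
  moreover have "d^4 / R\<^sup>2 > 0" using d0 R by simp
  ultimately show False by (simp add: field_simps)
qed

lemma weak_limit_Pair_in_closed_convex:
  fixes G :: "('a::complex_inner \<times> 'b::complex_inner) set"
  assumes "closed G" "convex G" "\<And>k. (y k, z k) \<in> G"
    and "\<And>k. norm (y k) \<le> By" "\<And>k. norm (z k) \<le> Bz"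
    and "y \<longlonglongrightarrow> a" "\<And>v. (\<lambda>k. cinner (z k) v) \<longlonglongrightarrow> cinner b v"
  shows "(a, b) \<in> G"
proof (rule weak_limit_in_closed_convex[where g = "\<lambda>k. (y k, z k)" and B = "By + Bz"])
  show "norm (y k, z k) \<le> By + Bz" for k
    using norm_Pair_le[of "y k" "z k"] assms(4,5)[of k] by linarith
  fix q :: "'a \<times> 'b"
  have "(\<lambda>k. cinner (fst q) (y k) + cnj (cinner (z k) (snd q)))
      \<longlonglongrightarrow> cinner (fst q) a + cnj (cinner b (snd q))"
    by (intro tendsto_add tendsto_cnj tendsto_cinner tendsto_const assms(6,7))
  then show "(\<lambda>k. Re (cinner q (y k, z k))) \<longlonglongrightarrow> Re (cinner q (a, b))"
    by (intro tendsto_Re) (simp add: cinner_prod_def cinner_commute[of "snd q"])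
qed (use assms in auto)

section \<open>Closures of symmetric operators\<close>

lemma csubspace_closure:
  fixes A :: "'a::complex_inner set"
  assumes "csubspace A"
  shows "csubspace (closure A)"
  unfolding csubspace_def
proof (intro conjI ballI allI)
  show "0 \<in> closure A" using assms closure_subset unfolding csubspace_def by blast
next
  fix x y assume "x \<in> closure A" "y \<in> closure A"
  then obtain s t where "\<And>n. s n \<in> A" "s \<longlonglongrightarrow> x" "\<And>n. t n \<in> A" "t \<longlonglongrightarrow> y"
    unfolding closure_sequential by blast
  moreover have "\<And>n. s n \<in> A \<Longrightarrow> t n \<in> A \<Longrightarrow> s n + t n \<in> A"
    using assms unfolding csubspace_def by blast
  ultimately show "x + y \<in> closure A"
    unfolding closure_sequential by (intro exI[of _ "\<lambda>n. s n + t n"]) (auto intro: tendsto_add)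
next
  fix c x assume "x \<in> closure A"
  then obtain s where "\<And>n. s n \<in> A" "s \<longlonglongrightarrow> x"
    unfolding closure_sequential by blast
  moreover have "\<And>n. s n \<in> A \<Longrightarrow> scaleC c (s n) \<in> A"
    using assms unfolding csubspace_def by blast
  ultimately show "scaleC c x \<in> closure A"
    unfolding closure_sequential
    by (intro exI[of _ "\<lambda>n. scaleC c (s n)"]) (auto intro: bounded_linear.tendsto[OF bounded_linear_scaleC])
qed

lemma csubspace_imp_convex:
  assumes "csubspace A"
  shows "convex A"
proof (rule convexI)
  fix x y u v assume "x \<in> A" "y \<in> A"
  then have "scaleC (of_real u) x + scaleC (of_real v) y \<in> A"
    using assms unfolding csubspace_def by blast
  then show "u *\<^sub>R x + v *\<^sub>R y \<in> A" by (simp only: scaleR_scaleC)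
qed

lemma csubspace_graph_op:
  assumes "clinear_on S T"
  shows "csubspace (graph_op S T)"
proof -
  have S: "csubspace S" and add: "\<And>x y. x \<in> S \<Longrightarrow> y \<in> S \<Longrightarrow> T (x + y) = T x + T y"
    and scale: "\<And>c x. x \<in> S \<Longrightarrow> T (scaleC c x) = scaleC c (T x)"
    using assms unfolding clinear_on_def by blast+
  have "0 \<in> S" using S unfolding csubspace_def by blast
  moreover have "T 0 = 0" using add[OF \<open>0 \<in> S\<close> \<open>0 \<in> S\<close>] by simp
  ultimately show ?thesis
    using S add scale unfolding csubspace_def graph_op_def
    by (auto simp: zero_prod_def scaleC_Pair)
qed

lemma adjoint_relation_closure_graph:
  fixes S :: "'a::complex_inner set"
  assumes adj: "\<And>u. u \<in> S \<Longrightarrow> cinner (T u) y = cinner u w"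
    and ab: "(a, b) \<in> closure (graph_op S T)"
  shows "cinner b y = cinner a w"
proof -
  obtain s where sG: "\<And>n. s n \<in> graph_op S T" and lim: "s \<longlonglongrightarrow> (a, b)"
    using ab unfolding closure_sequential by blast
  have "(\<lambda>n. cinner (snd (s n)) y) \<longlonglongrightarrow> cinner b y"
    using tendsto_cinner[OF tendsto_snd[OF lim] tendsto_const] by simp
  moreover have "(\<lambda>n. cinner (snd (s n)) y) \<longlonglongrightarrow> cinner a w"
  proof -
    have "cinner (snd (s n)) y = cinner (fst (s n)) w" for n
      using sG[of n] adj by (auto simp: graph_op_def)
    then show ?thesis using tendsto_cinner[OF tendsto_fst[OF lim] tendsto_const] by simp
  qed
  ultimately show ?thesis by (rule LIMSEQ_unique)
qed

lemma adj_dom_antimono: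
  assumes "S \<subseteq> D" "\<And>x. x \<in> S \<Longrightarrow> A x = T x"
  shows "adj_dom D A \<subseteq> adj_dom S T"
proof
  fix y assume "y \<in> adj_dom D A"
  then obtain z where "\<forall>x\<in>D. cinner (A x) y = cinner x z" unfolding adj_dom_def by blast
  then have "\<forall>x\<in>S. cinner (T x) y = cinner x z" using assms by (metis subsetD)
  then show "y \<in> adj_dom S T" unfolding adj_dom_def by blast
qed

lemma in_closure_dom:
  assumes "(x, z) \<in> closure (graph_op S T)"
  shows "x \<in> closure_dom S T"
  using imageI[OF assms, of fst] unfolding closure_dom_def by simp

lemma graph_in_closure_graph: "x \<in> S \<Longrightarrow> (x, T x) \<in> closure (graph_op S T)"
  by (rule closure_subset[THEN subsetD]) (auto simp: graph_op_def)

context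
  fixes S :: "'a::complex_inner set" and T :: "'a \<Rightarrow> 'a"
  assumes sym: "symmetric_op S T"
begin

lemma symmetric_op_dense: "closure S = UNIV"
  using sym unfolding symmetric_op_def by blast

lemma symmetric_op_hermitian: "x \<in> S \<Longrightarrow> y \<in> S \<Longrightarrow> cinner (T x) y = cinner x (T y)"
  using sym unfolding symmetric_op_def by blast

lemma closure_graph_hermitian:
  assumes "(a, b) \<in> closure (graph_op S T)" "x \<in> S"
  shows "cinner b x = cinner a (T x)"
  by (rule adjoint_relation_closure_graph[OF symmetric_op_hermitian[OF _ assms(2)] assms(1)])

lemma closure_graph_functional:
  assumes "(x, z1) \<in> closure (graph_op S T)" "(x, z2) \<in> closure (graph_op S T)"
  shows "z1 = z2"
proof -
  have "cinner u (z1 - z2) = 0" if "u \<in> S" for u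
  proof -
    have "cinner z1 u = cinner z2 u"
      using closure_graph_hermitian[OF assms(1) that] closure_graph_hermitian[OF assms(2) that]
      by simp
    then show ?thesis
      using cinner_commute[of u z1] cinner_commute[of u z2] by (simp add: cinner_diff_right)
  qed
  then show ?thesis using orthogonal_dense_eq_0[OF symmetric_op_dense] by fastforce
qed

lemma closure_op_eqI:
  assumes "(x, z) \<in> closure (graph_op S T)"
  shows "closure_op S T x = z"
  unfolding closure_op_def
  by (rule the_equality) (auto intro: assms closure_graph_functional[OF _ assms])

lemma closure_op_in_closure_graph:
  assumes "x \<in> closure_dom S T"
  shows "(x, closure_op S T x) \<in> closure (graph_op S T)"
proof -
  obtain p where "p \<in> closure (graph_op S T)" "x = fst p"
    using assms unfolding closure_dom_def by blast
  then have "(x, snd p) \<in> closure (graph_op S T)" by simp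
  with closure_op_eqI show ?thesis by simp
qed

lemma subset_closure_dom: "S \<subseteq> closure_dom S T"
  using graph_in_closure_graph in_closure_dom by blast

lemma closure_op_extends: "x \<in> S \<Longrightarrow> closure_op S T x = T x"
  by (rule closure_op_eqI[OF graph_in_closure_graph])

lemma csubspace_closure_graph: "csubspace (closure (graph_op S T))"
  using sym csubspace_closure csubspace_graph_op unfolding symmetric_op_def by blast

lemma symmetric_op_closure: "symmetric_op (closure_dom S T) (closure_op S T)"
proof -
  let ?G = "closure (graph_op S T)" and ?D = "closure_dom S T" and ?A = "closure_op S T"
  have "clinear_on ?D ?A"
    unfolding clinear_on_def csubspace_def
  proof (intro conjI ballI allI)
    show "0 \<in> ?D"
      using csubspace_closure_graph in_closure_dom unfolding csubspace_def zero_prod_def by blast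
  next
    fix x y assume "x \<in> ?D" "y \<in> ?D"
    then have "(x, ?A x) + (y, ?A y) \<in> ?G"
      using csubspace_closure_graph closure_op_in_closure_graph unfolding csubspace_def by blast
    then have xy: "(x + y, ?A x + ?A y) \<in> ?G" by simp
    show "x + y \<in> ?D" by (rule in_closure_dom[OF xy])
    show "?A (x + y) = ?A x + ?A y" by (rule closure_op_eqI[OF xy])
  next
    fix c x assume "x \<in> ?D"
    then have "scaleC c (x, ?A x) \<in> ?G"
      using csubspace_closure_graph closure_op_in_closure_graph unfolding csubspace_def by blast
    then have cx: "(scaleC c x, scaleC c (?A x)) \<in> ?G" by (simp add: scaleC_Pair)
    show "scaleC c x \<in> ?D" by (rule in_closure_dom[OF cx])
    show "?A (scaleC c x) = scaleC c (?A x)" by (rule closure_op_eqI[OF cx])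
  qed
  moreover have "closure ?D = UNIV"
    using closure_mono[OF subset_closure_dom] symmetric_op_dense by auto
  moreover have "cinner (?A x) y = cinner x (?A y)" if "x \<in> ?D" "y \<in> ?D" for x y
  proof (rule adjoint_relation_closure_graph[OF _ closure_op_in_closure_graph[OF that(1)]])
    fix u assume "u \<in> S"
    then show "cinner (T u) y = cinner u (?A y)"
      using closure_graph_hermitian[OF closure_op_in_closure_graph[OF that(2)] \<open>u \<in> S\<close>]
        cinner_commute[of u "?A y"] cinner_commute[of "T u" y] by simp
  qed
  ultimately show ?thesis unfolding symmetric_op_def by blast
qed

end

lemma self_adjoint_if_adj_dom_subset:
  assumes sym: "symmetric_op D A" and adj: "adj_dom D A \<subseteq> D"
  shows "self_adjoint_op D A"
proof -
  have herm: "\<forall>x\<in>D. cinner (A x) y = cinner x (A y)" if "y \<in> D" for y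
    using sym that unfolding symmetric_op_def by blast
  then have "D \<subseteq> adj_dom D A" unfolding adj_dom_def by blast
  moreover have "adj_op D A y = A y" if y: "y \<in> D" for y
  proof -
    have "\<forall>x\<in>D. cinner (A x) y = cinner x (adj_op D A y)"
      unfolding adj_op_def by (rule someI, rule herm[OF y])
    then have "cinner x (adj_op D A y - A y) = 0" if "x \<in> D" for x
      using herm[OF y] that by (simp add: cinner_diff_right)
    then have "adj_op D A y - A y = 0"
      using orthogonal_dense_eq_0[of D] sym unfolding symmetric_op_def by blast
    then show ?thesis by simp
  qed
  ultimately show ?thesis using sym adj unfolding self_adjoint_op_def symmetric_op_def by blast
qed

lemma ess_self_adjoint_if_adj_dom_subset_closure_dom:
  assumes "symmetric_op S T" "adj_dom S T \<subseteq> closure_dom S T"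
  shows "ess_self_adjoint S T"
  unfolding ess_self_adjoint_def
proof (rule self_adjoint_if_adj_dom_subset[OF symmetric_op_closure[OF assms(1)]])
  have "adj_dom (closure_dom S T) (closure_op S T) \<subseteq> adj_dom S T"
    by (rule adj_dom_antimono[OF subset_closure_dom closure_op_extends]) (use assms(1) in auto)
  with assms(2) show "adj_dom (closure_dom S T) (closure_op S T) \<subseteq> closure_dom S T" by blast
qed

section \<open>Adequate approximate identities\<close>

lemma cinner_closure_op_commutator:
  assumes sym: "symmetric_op S T"
    and A_herm: "\<And>x z. cinner (A x) z = cinner x (A z)"
    and A_dom: "A ` adj_dom S T \<subseteq> closure_dom S T"
    and yw: "\<And>u. u \<in> S \<Longrightarrow> cinner (T u) y = cinner u w"
    and x: "x \<in> S"
  shows "cinner (closure_op S T (A y)) x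
    = cinner (A w) x - cinner y (closure_op S T (A x) - A (T x))"
proof -
  have "y \<in> adj_dom S T" using yw unfolding adj_dom_def by blast
  then have "cinner (closure_op S T (A y)) x = cinner (A y) (T x)"
    using A_dom closure_graph_hermitian[OF sym closure_op_in_closure_graph[OF sym] x] by blast
  also have "\<dots> = cinner y (A (T x))" by (rule A_herm)
  finally have Ay: "cinner (closure_op S T (A y)) x = cinner y (A (T x))" .
  have "x \<in> adj_dom S T"
    using x symmetric_op_hermitian[OF sym] unfolding adj_dom_def by blast
  then have "cinner (closure_op S T (A x)) y = cinner (A x) w"
    using A_dom closure_op_in_closure_graph[OF sym] adjoint_relation_closure_graph[OF yw] by blast
  then have "cinner y (closure_op S T (A x)) = cinner (A w) x"
    using cinner_commute[of y] cinner_commute[of w "A x"] A_herm[of w x] by simp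
  with Ay show ?thesis by (simp add: cinner_diff_right)
qed

lemma adj_dom_subset_closure_dom:
  fixes S :: "'a::complex_inner set"
  assumes sym: "symmetric_op S T" and ad: "adequate_approx_identity S T \<phi>"
  shows "adj_dom S T \<subseteq> closure_dom S T"
proof
  fix y assume "y \<in> adj_dom S T"
  then obtain w where yw: "\<And>u. u \<in> S \<Longrightarrow> cinner (T u) y = cinner u w"
    unfolding adj_dom_def by blast
  have herm: "\<And>k x z. cinner (\<phi> k x) z = cinner x (\<phi> k z)"
    and conv: "\<And>x. (\<lambda>k. \<phi> k x) \<longlonglongrightarrow> x"
    and dom: "\<And>k. \<phi> k ` adj_dom S T \<subseteq> closure_dom S T"
    using ad unfolding adequate_approx_identity_def seq_approx_identity_def bounded_selfadj_def
    by blast+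
  obtain C where C: "\<And>k x. x \<in> S \<Longrightarrow> norm (closure_op S T (\<phi> k x) - \<phi> k (T x)) \<le> C * norm x"
    using ad unfolding adequate_approx_identity_def by blast
  define z where "z k = closure_op S T (\<phi> k y)" for k
  obtain Ky where Ky: "\<And>k. norm (\<phi> k y) \<le> Ky"
    using convergent_imp_Bseq[OF convergentI[OF conv[of y]]] unfolding Bseq_def by blast
  obtain Kw where Kw: "\<And>k. norm (\<phi> k w) \<le> Kw" "Kw \<ge> 0"
    using convergent_imp_Bseq[OF convergentI[OF conv[of w]]] unfolding Bseq_def
    by (metis less_imp_le)
  define M where "M = Kw + norm y * max C 0"
  have graph: "(\<phi> k y, z k) \<in> closure (graph_op S T)" for k
    unfolding z_def using dom \<open>y \<in> adj_dom S T\<close> closure_op_in_closure_graph[OF sym] by blast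
  have "cmod (cinner (z k) x) \<le> M * norm x" if x: "x \<in> S" for k x
  proof -
    let ?c = "closure_op S T (\<phi> k x) - \<phi> k (T x)"
    have "cmod (cinner (\<phi> k w) x) \<le> Kw * norm x"
      using cauchy_schwarz[of "\<phi> k w" x] Kw(1)[of k] by (meson mult_right_mono norm_ge_zero order_trans)
    moreover have "cmod (cinner y ?c) \<le> norm y * (max C 0 * norm x)"
      using cauchy_schwarz[of y] C[OF x, of k]
      by (meson max.cobounded1 mult_left_mono mult_right_mono norm_ge_zero order_trans)
    moreover have "cmod (cinner (z k) x) = cmod (cinner (\<phi> k w) x - cinner y ?c)"
      unfolding z_def by (simp only: cinner_closure_op_commutator[OF sym herm dom yw x])
    moreover have "cmod (cinner (\<phi> k w) x - cinner y ?c) \<le> cmod (cinner (\<phi> k w) x) + cmod (cinner y ?c)"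
      by (rule norm_triangle_ineq4)
    ultimately show ?thesis by (simp add: M_def algebra_simps)
  qed
  then have z_bounded: "norm (z k) \<le> M" for k
    using norm_le_if_cinner_bounded_on_dense[OF symmetric_op_dense[OF sym]] Kw(2)
    by (simp add: M_def)
  have "(\<lambda>k. cinner (z k) x) \<longlonglongrightarrow> cinner w x" if x: "x \<in> S" for x
  proof -
    have "(\<lambda>k. cinner (z k) x) = (\<lambda>k. cinner (\<phi> k y) (T x))"
      using closure_graph_hermitian[OF sym graph x] by simp
    moreover have "cinner y (T x) = cinner w x"
      using yw[OF x] cinner_commute[of y] cinner_commute[of w] by simp
    ultimately show ?thesis using tendsto_cinner[OF conv[of y] tendsto_const[of "T x"]] by simp
  qed
  then have "(\<lambda>k. cinner (z k) v) \<longlonglongrightarrow> cinner w v" for v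
    by (rule weak_convergence_from_dense[OF symmetric_op_dense[OF sym] z_bounded])
  then have "(y, w) \<in> closure (graph_op S T)"
    using csubspace_imp_convex[OF csubspace_closure_graph[OF sym]]
    by (intro weak_limit_Pair_in_closed_convex[OF _ _ graph Ky z_bounded conv]) auto
  then show "y \<in> closure_dom S T" by (rule in_closure_dom)
qed

theorem mainTheorem2:
  fixes S :: "'a::{complex_inner, complete_space} set" and T :: "'a \<Rightarrow> 'a"
  assumes "symmetric_op S T"
    and "\<exists>\<phi>. adequate_approx_identity S T \<phi>"
  shows "ess_self_adjoint S T"
  using assms ess_self_adjoint_if_adj_dom_subset_closure_dom adj_dom_subset_closure_dom by blast

end
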